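(* Let $V$ be a real vector space of finite even dimension $n$ with nondegenerate quadratic form $Q$, and let $\sigma$ be a real structure on $\mathbb{C}l(V)$. Then the $\sigma$-product $(a,b)_\sigma:=\tau_n(\sigma(a^T)b)$ is a nondegenerate hermitian form on $\mathbb{C}l(V)$; its associated quadratic form restricts to $Q_\sigma$ on $V$ (i.e. $(v,v)_\sigma=Q_\sigma(v)$ for $v\in V$) and to $Q$ on $V_\sigma$; it satisfies $(w_1\cdots w_k,w_1\cdots w_k)_\sigma=Q(w_1)\cdots Q(w_k)$ for all $w_1,\dots,w_k\in V_\sigma$; and if $(e_i)_{1\le i\le n}$ is a pseudo-orthonormal basis of $V_\sigma$ for $Q$, then $(e_I)_{I\subset\{1,\dots,n\}}$ is a pseudo-orthonormal basis of $\mathbb{C}l(V)$ for the $\sigma$-product.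
   Context: $Cl(V,Q)$ is the real Clifford algebra with $v^2=+Q(v)$, $\mathbb{C}l(V)$ its complexification, $V^{\mathbb{C}}\subset\mathbb{C}l(V)$, $B$ the bilinear form of $Q$ extended complex-bilinearly. $T$ is the linear antiautomorphism of $\mathbb{C}l(V)$ restricting to the identity on $V$, $a^T=T(a)$. A real structure is an involutive antilinear algebra automorphism of $\mathbb{C}l(V)$ stabilizing $V^{\mathbb{C}}$. $V_\sigma=\{v\in V^{\mathbb{C}}:\sigma(v)=v\}$ (on which $Q$ is real and nondegenerate); $Q_\sigma(v)=B(\sigma(v),v)$ for $v\in V$. For a basis $(e_i)$ and $I=\{i_1<\dots<i_k\}$, $e_I=e_{i_1}\cdots e_{i_k}$, $e_\emptyset=1$. The normalized trace $\tau_n:\mathbb{C}l(V)\to\mathbb{C}$ is the coordinate on $1$ in the basis $(e_I)$ associated with any pseudo-orthonormal basis of $V^{\mathbb{C}}$ (it is the unique linear form with $\tau_n(ab)=\tau_n(ba)$ and $\tau_n(1)=1$). A pseudo-orthonormal basis for a form is an orthogonal basis whose vectors have square $\pm1$. *)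

theory Defs
  imports Complex_Main
begin

text \<open>By Sylvester's law of inertia we use a basis
e_0,...,e_(n-1) of V which is pseudo-orthonormal for Q, with Q(e_i) = eps i in {1,-1}.
An element of Cl(V) (complexified) is a coefficient function on subsets I of {..<n},
a I being the coordinate on the basis element e_I = e_(i_1)...e_(i_k) (i_1<...<i_k).\<close>

type_synonym cl = "nat set \<Rightarrow> complex"

definition CL :: "nat \<Rightarrow> cl set" where
  "CL n = {a. \<forall>I. a I \<noteq> 0 \<longrightarrow> I \<subseteq> {..<n}}"

definition cl_zero :: cl where "cl_zero = (\<lambda>I. 0)"
definition cl_one :: cl where "cl_one = (\<lambda>I. if I = {} then 1 else 0)"
definition cl_add :: "cl \<Rightarrow> cl \<Rightarrow> cl" where "cl_add a b = (\<lambda>I. a I + b I)"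
definition cl_scale :: "complex \<Rightarrow> cl \<Rightarrow> cl" where "cl_scale c a = (\<lambda>I. c * a I)"
definition cl_sum :: "('i \<Rightarrow> cl) \<Rightarrow> 'i set \<Rightarrow> cl" where
  "cl_sum f A = (\<lambda>K. \<Sum>i\<in>A. f i K)"

text \<open>Sign in e_I e_J = blade_sign eps I J * e_(I symdiff J), using v^2 = +Q(v).\<close>
definition blade_sign :: "(nat \<Rightarrow> real) \<Rightarrow> nat set \<Rightarrow> nat set \<Rightarrow> complex" where
  "blade_sign eps I J =
     (-1) ^ card {(i, j). i \<in> I \<and> j \<in> J \<and> j < i} * (\<Prod>k\<in>I \<inter> J. complex_of_real (eps k))"

definition cl_mul :: "nat \<Rightarrow> (nat \<Rightarrow> real) \<Rightarrow> cl \<Rightarrow> cl \<Rightarrow> cl" where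
  "cl_mul n eps a b = (\<lambda>K. \<Sum>I\<in>Pow {..<n}. \<Sum>J\<in>Pow {..<n}.
      if (I - J) \<union> (J - I) = K then blade_sign eps I J * a I * b J else 0)"

definition VC :: "nat \<Rightarrow> cl set" where
  "VC n = {a \<in> CL n. \<forall>I. a I \<noteq> 0 \<longrightarrow> card I = 1}"

definition VR :: "nat \<Rightarrow> cl set" where
  "VR n = {a \<in> VC n. \<forall>I. a I \<in> \<real>}"

definition clB :: "nat \<Rightarrow> (nat \<Rightarrow> real) \<Rightarrow> cl \<Rightarrow> cl \<Rightarrow> complex" where
  "clB n eps v w = (\<Sum>i<n. complex_of_real (eps i) * v {i} * w {i})"

definition clQ :: "nat \<Rightarrow> (nat \<Rightarrow> real) \<Rightarrow> cl \<Rightarrow> complex" where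
  "clQ n eps v = clB n eps v v"

text \<open>T: the linear antiautomorphism restricting to the identity on V (reversion).\<close>
definition cl_transpose :: "cl \<Rightarrow> cl" where
  "cl_transpose a = (\<lambda>I. (-1) ^ (card I * (card I - 1) div 2) * a I)"

definition tau :: "cl \<Rightarrow> complex" where "tau a = a {}"

definition real_structure :: "nat \<Rightarrow> (nat \<Rightarrow> real) \<Rightarrow> (cl \<Rightarrow> cl) \<Rightarrow> bool" where
  "real_structure n eps \<sigma> \<longleftrightarrow>
     (\<forall>a\<in>CL n. \<sigma> a \<in> CL n) \<and>
     (\<forall>a\<in>CL n. \<sigma> (\<sigma> a) = a) \<and>
     (\<forall>a\<in>CL n. \<forall>b\<in>CL n. \<sigma> (cl_add a b) = cl_add (\<sigma> a) (\<sigma> b)) \<and>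
     (\<forall>c. \<forall>a\<in>CL n. \<sigma> (cl_scale c a) = cl_scale (cnj c) (\<sigma> a)) \<and>
     (\<forall>a\<in>CL n. \<forall>b\<in>CL n. \<sigma> (cl_mul n eps a b) = cl_mul n eps (\<sigma> a) (\<sigma> b)) \<and>
     \<sigma> cl_one = cl_one \<and>
     (\<forall>v\<in>VC n. \<sigma> v \<in> VC n)"

definition V_sigma :: "nat \<Rightarrow> (cl \<Rightarrow> cl) \<Rightarrow> cl set" where
  "V_sigma n \<sigma> = {v \<in> VC n. \<sigma> v = v}"

definition Q_sigma :: "nat \<Rightarrow> (nat \<Rightarrow> real) \<Rightarrow> (cl \<Rightarrow> cl) \<Rightarrow> cl \<Rightarrow> complex" where
  "Q_sigma n eps \<sigma> v = clB n eps (\<sigma> v) v"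

definition sprod :: "nat \<Rightarrow> (nat \<Rightarrow> real) \<Rightarrow> (cl \<Rightarrow> cl) \<Rightarrow> cl \<Rightarrow> cl \<Rightarrow> complex" where
  "sprod n eps \<sigma> a b = tau (cl_mul n eps (\<sigma> (cl_transpose a)) b)"

definition hermitian_form :: "nat \<Rightarrow> (cl \<Rightarrow> cl \<Rightarrow> complex) \<Rightarrow> bool" where
  "hermitian_form n h \<longleftrightarrow>
     (\<forall>a\<in>CL n. \<forall>b\<in>CL n. \<forall>c\<in>CL n.
        h (cl_add a b) c = h a c + h b c \<and> h a (cl_add b c) = h a b + h a c) \<and>
     (\<forall>z. \<forall>a\<in>CL n. \<forall>b\<in>CL n.
        h (cl_scale z a) b = cnj z * h a b \<and> h a (cl_scale z b) = z * h a b) \<and>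
     (\<forall>a\<in>CL n. \<forall>b\<in>CL n. h b a = cnj (h a b))"

definition nondegenerate_form :: "nat \<Rightarrow> (cl \<Rightarrow> cl \<Rightarrow> complex) \<Rightarrow> bool" where
  "nondegenerate_form n h \<longleftrightarrow> (\<forall>a\<in>CL n. (\<forall>b\<in>CL n. h a b = 0) \<longrightarrow> a = cl_zero)"

definition cl_prod :: "nat \<Rightarrow> (nat \<Rightarrow> real) \<Rightarrow> cl list \<Rightarrow> cl" where
  "cl_prod n eps ws = foldr (cl_mul n eps) ws cl_one"

definition blade_of :: "nat \<Rightarrow> (nat \<Rightarrow> real) \<Rightarrow> (nat \<Rightarrow> cl) \<Rightarrow> nat set \<Rightarrow> cl" where
  "blade_of n eps e I = cl_prod n eps (map e (sorted_list_of_set I))"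

definition pon_basis_Vsigma :: "nat \<Rightarrow> (nat \<Rightarrow> real) \<Rightarrow> (cl \<Rightarrow> cl) \<Rightarrow> (nat \<Rightarrow> cl) \<Rightarrow> bool" where
  "pon_basis_Vsigma n eps \<sigma> e \<longleftrightarrow>
     (\<forall>i<n. e i \<in> V_sigma n \<sigma>) \<and>
     (\<forall>c :: nat \<Rightarrow> real. cl_sum (\<lambda>i. cl_scale (complex_of_real (c i)) (e i)) {..<n} = cl_zero
         \<longrightarrow> (\<forall>i<n. c i = 0)) \<and>
     (\<forall>v\<in>V_sigma n \<sigma>. \<exists>c :: nat \<Rightarrow> real.
         v = cl_sum (\<lambda>i. cl_scale (complex_of_real (c i)) (e i)) {..<n}) \<and>
     (\<forall>i<n. \<forall>j<n. i \<noteq> j \<longrightarrow> clB n eps (e i) (e j) = 0) \<and>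
     (\<forall>i<n. clQ n eps (e i) = 1 \<or> clQ n eps (e i) = -1)"

definition pon_basis_CL :: "nat \<Rightarrow> (cl \<Rightarrow> cl \<Rightarrow> complex) \<Rightarrow> (nat set \<Rightarrow> cl) \<Rightarrow> bool" where
  "pon_basis_CL n h f \<longleftrightarrow>
     (\<forall>I\<in>Pow {..<n}. f I \<in> CL n) \<and>
     (\<forall>c :: nat set \<Rightarrow> complex. cl_sum (\<lambda>I. cl_scale (c I) (f I)) (Pow {..<n}) = cl_zero
         \<longrightarrow> (\<forall>I\<in>Pow {..<n}. c I = 0)) \<and>
     (\<forall>a\<in>CL n. \<exists>c :: nat set \<Rightarrow> complex. a = cl_sum (\<lambda>I. cl_scale (c I) (f I)) (Pow {..<n})) \<and>
     (\<forall>I\<in>Pow {..<n}. \<forall>J\<in>Pow {..<n}. I \<noteq> J \<longrightarrow> h (f I) (f J) = 0) \<and>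
     (\<forall>I\<in>Pow {..<n}. h (f I) (f I) = 1 \<or> h (f I) (f I) = -1)"

end

theory Submission
  imports Defs "HOL-Library.Function_Algebras"
begin

(*
  In the coordinate model, e_I e_J = s(I,J) e_(I \<triangle> J) with an explicit sign s.  A cocycle
  identity for s gives associativity, and counting inversions shows that T reverses products.
  Both facts needed for hermitian symmetry, \<sigma>T = T\<sigma> and \<tau>(\<sigma> a) = conj(\<tau> a), reduce to basis
  blades.  For K \<noteq> {}, \<sigma>(e_K) is a product of the pairwise anticommuting \<sigma>(e_i), whose squares
  are nonzero scalars; since n is even, some \<sigma>(e_j) anticommutes with this product, and
  conjugating by it shows that its trace vanishes.  The same argument applied to a
  pseudo-orthonormal basis (e_i) of V_\<sigma> makes the blades e_I pairwise orthogonal, and since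
  \<sigma>((w_1\<cdots>w_k)^T) = w_k\<cdots>w_1 for w_i \<in> V_\<sigma>, their norms are products of the Q(e_i) = \<plusminus>1.
  Orthogonal vectors of nonzero norm are independent, and there are 2^n of them, so they form
  a basis.  Nondegeneracy comes from \<tau>(ab) = \<Sum>_I s(I,I) a_I b_I.
*)

text \<open>A constant for the symmetric difference, so that the simplifier treats it as the group
  operation on index sets instead of unfolding it.\<close>
definition symdiff :: "nat set \<Rightarrow> nat set \<Rightarrow> nat set" where
  "symdiff I J = sym_diff I J"

lemma symdiff_eq_iff: "symdiff I J = K \<longleftrightarrow> J = symdiff I K"
  unfolding symdiff_def by blast

lemma symdiff_self [simp]: "symdiff I I = {}"
  unfolding symdiff_def by blast

lemma symdiff_empty [simp]: "symdiff I {} = I" "symdiff {} I = I"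
  unfolding symdiff_def by auto

lemma symdiff_cancel_left [simp]: "symdiff I (symdiff I K) = K"
  unfolding symdiff_def by blast

lemma symdiff_commute: "symdiff I J = symdiff J I"
  unfolding symdiff_def by blast

lemma symdiff_assoc: "symdiff (symdiff I J) K = symdiff I (symdiff J K)"
  unfolding symdiff_def by blast

lemma symdiff_left_commute: "symdiff J (symdiff I K) = symdiff I (symdiff J K)"
  unfolding symdiff_def by blast

lemma finite_symdiff: "finite I \<Longrightarrow> finite J \<Longrightarrow> finite (symdiff I J)"
  unfolding symdiff_def by blast

lemma symdiff_subset: "I \<subseteq> A \<Longrightarrow> J \<subseteq> A \<Longrightarrow> symdiff I J \<subseteq> A"
  unfolding symdiff_def by blast

lemma finite_subset_lessThan: "I \<subseteq> {..<(n::nat)} \<Longrightarrow> finite I"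
  using finite_subset by blast

lemma sum_Pow_symdiff_reindex:
  "I \<subseteq> A \<Longrightarrow> (\<Sum>M\<in>Pow A. f M) = (\<Sum>J\<in>Pow A. f (symdiff I J))"
  by (rule sum.reindex_bij_witness[of _ "symdiff I" "symdiff I"]) (auto simp: symdiff_subset)

lemma cl_mul_apply:
  "cl_mul n eps a b K = (if K \<subseteq> {..<n}
     then \<Sum>I\<in>Pow {..<n}. blade_sign eps I (symdiff I K) * a I * b (symdiff I K) else 0)"
proof (cases "K \<subseteq> {..<n}")
  case True
  have "cl_mul n eps a b K = (\<Sum>I\<in>Pow {..<n}. \<Sum>J\<in>Pow {..<n}.
      if J = symdiff I K then blade_sign eps I J * a I * b J else 0)"
    unfolding cl_mul_def by (intro sum.cong refl) (metis symdiff_def symdiff_eq_iff)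
  also have "\<dots> = (\<Sum>I\<in>Pow {..<n}. blade_sign eps I (symdiff I K) * a I * b (symdiff I K))"
    using True by (intro sum.cong refl) (simp add: symdiff_subset)
  finally show ?thesis using True by simp
next
  case False
  then show ?thesis unfolding cl_mul_def by (auto intro!: sum.neutral)
qed

lemma cl_mul_apply_in:
  "K \<subseteq> {..<n} \<Longrightarrow>
   cl_mul n eps a b K = (\<Sum>I\<in>Pow {..<n}. blade_sign eps I (symdiff I K) * a I * b (symdiff I K))"
  by (simp add: cl_mul_apply)

lemma tau_cl_mul: "tau (cl_mul n eps a b) = (\<Sum>I\<in>Pow {..<n}. blade_sign eps I I * a I * b I)"
  unfolding tau_def by (simp add: cl_mul_apply)

lemma tau_cl_mul_commute: "tau (cl_mul n eps a b) = tau (cl_mul n eps b a)"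
  unfolding tau_cl_mul by (intro sum.cong refl) simp

definition inversions :: "nat set \<Rightarrow> nat set \<Rightarrow> nat" where
  "inversions I J = card {(i, j). i \<in> I \<and> j \<in> J \<and> j < i}"

definition eps_prod :: "(nat \<Rightarrow> real) \<Rightarrow> nat set \<Rightarrow> complex" where
  "eps_prod eps S = (\<Prod>k\<in>S. complex_of_real (eps k))"

lemma blade_sign_eq: "blade_sign eps I J = (-1) ^ inversions I J * eps_prod eps (I \<inter> J)"
  unfolding blade_sign_def inversions_def eps_prod_def by simp

lemma inversions_Un_left:
  assumes "finite X" "finite Y" "X \<inter> Y = {}" "finite C"
  shows "inversions (X \<union> Y) C = inversions X C + inversions Y C"
proof -
  have "{(i, j). i \<in> X \<union> Y \<and> j \<in> C \<and> j < i} =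
        {(i, j). i \<in> X \<and> j \<in> C \<and> j < i} \<union> {(i, j). i \<in> Y \<and> j \<in> C \<and> j < i}"
    by auto
  moreover have "finite {(i, j). i \<in> Z \<and> j \<in> C \<and> j < i}" if "finite Z" for Z
    by (rule finite_subset[of _ "Z \<times> C"]) (use that assms in auto)
  ultimately show ?thesis
    unfolding inversions_def using assms by (subst card_Un_disjoint[symmetric]) auto
qed

lemma inversions_Un_right:
  assumes "finite X" "finite Y" "X \<inter> Y = {}" "finite C"
  shows "inversions C (X \<union> Y) = inversions C X + inversions C Y"
proof -
  have "{(i, j). i \<in> C \<and> j \<in> X \<union> Y \<and> j < i} =
        {(i, j). i \<in> C \<and> j \<in> X \<and> j < i} \<union> {(i, j). i \<in> C \<and> j \<in> Y \<and> j < i}"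
    by auto
  moreover have "finite {(i, j). i \<in> C \<and> j \<in> Z \<and> j < i}" if "finite Z" for Z
    by (rule finite_subset[of _ "C \<times> Z"]) (use that assms in auto)
  ultimately show ?thesis
    unfolding inversions_def using assms by (subst card_Un_disjoint[symmetric]) auto
qed

lemma inversions_Diff_Int_left:
  "finite A \<Longrightarrow> finite C \<Longrightarrow> inversions A C = inversions (A - B) C + inversions (A \<inter> B) C"
  by (subst Un_Diff_Int[of A B, symmetric]) (rule inversions_Un_left; auto)

lemma inversions_Diff_Int_right:
  "finite A \<Longrightarrow> finite C \<Longrightarrow> inversions C A = inversions C (A - B) + inversions C (A \<inter> B)"
  by (subst Un_Diff_Int[of A B, symmetric]) (rule inversions_Un_right; auto)

lemma inversions_symdiff_left:
  assumes "finite A" "finite B" "finite C"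
  shows "inversions (symdiff A B) C + 2 * inversions (A \<inter> B) C = inversions A C + inversions B C"
proof -
  have "inversions (symdiff A B) C = inversions (A - B) C + inversions (B - A) C"
    unfolding symdiff_def by (rule inversions_Un_left) (use assms in auto)
  then show ?thesis
    using inversions_Diff_Int_left[of A C B] inversions_Diff_Int_left[of B C A] assms
    by (simp add: Int_commute)
qed

lemma inversions_symdiff_right:
  assumes "finite A" "finite B" "finite C"
  shows "inversions C (symdiff A B) + 2 * inversions C (A \<inter> B) = inversions C A + inversions C B"
proof -
  have "inversions C (symdiff A B) = inversions C (A - B) + inversions C (B - A)"
    unfolding symdiff_def by (rule inversions_Un_right) (use assms in auto)
  then show ?thesis
    using inversions_Diff_Int_right[of A C B] inversions_Diff_Int_right[of B C A] assms
    by (simp add: Int_commute)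
qed

lemma neg_one_power_eq_if_even_add: "even (x + y) \<Longrightarrow> ((-1::complex) ^ x) = (-1) ^ y"
  by (metis even_add neg_one_even_power neg_one_odd_power)

lemma eps_prod_Un_disjoint:
  "finite X \<Longrightarrow> finite Y \<Longrightarrow> X \<inter> Y = {} \<Longrightarrow> eps_prod eps (X \<union> Y) = eps_prod eps X * eps_prod eps Y"
  unfolding eps_prod_def by (rule prod.union_disjoint)

text \<open>The cocycle identity behind associativity: e_I e_J e_L computed in either order.\<close>
lemma blade_sign_cocycle:
  assumes "finite I" "finite J" "finite L"
  shows "blade_sign eps I J * blade_sign eps (symdiff I J) L =
         blade_sign eps I (symdiff J L) * blade_sign eps J L"
proof -
  have "even (inversions I J + inversions (symdiff I J) L + (inversions I (symdiff J L) + inversions J L))"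
  proof -
    have "inversions I J + inversions (symdiff I J) L + (inversions I (symdiff J L) + inversions J L)
          + 2 * (inversions (I \<inter> J) L + inversions I (J \<inter> L))
          = 2 * (inversions I J + inversions I L + inversions J L)"
      using inversions_symdiff_left[of I J L] inversions_symdiff_right[of J L I] assms by simp
    then show ?thesis by (metis dvd_add_left_iff dvd_triv_left)
  qed
  then have signs: "((-1::complex) ^ (inversions I J + inversions (symdiff I J) L)) =
                    (-1) ^ (inversions I (symdiff J L) + inversions J L)"
    by (rule neg_one_power_eq_if_even_add)
  define M where "M = (I \<inter> J) \<union> (I \<inter> L) \<union> (J \<inter> L)"
  have "M = (I \<inter> J) \<union> (symdiff I J \<inter> L)" "(I \<inter> J) \<inter> (symdiff I J \<inter> L) = {}"
    unfolding M_def symdiff_def by blast+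
  then have left: "eps_prod eps (I \<inter> J) * eps_prod eps (symdiff I J \<inter> L) = eps_prod eps M"
    using assms by (simp add: eps_prod_Un_disjoint)
  have "M = (I \<inter> symdiff J L) \<union> (J \<inter> L)" "(I \<inter> symdiff J L) \<inter> (J \<inter> L) = {}"
    unfolding M_def symdiff_def by blast+
  then have right: "eps_prod eps (I \<inter> symdiff J L) * eps_prod eps (J \<inter> L) = eps_prod eps M"
    using assms by (simp add: eps_prod_Un_disjoint)
  have "blade_sign eps I J * blade_sign eps (symdiff I J) L =
        (-1) ^ (inversions I J + inversions (symdiff I J) L) *
        (eps_prod eps (I \<inter> J) * eps_prod eps (symdiff I J \<inter> L))"
    unfolding blade_sign_eq power_add by (simp only: mult_ac)
  also have "\<dots> = (-1) ^ (inversions I (symdiff J L) + inversions J L) *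
        (eps_prod eps (I \<inter> symdiff J L) * eps_prod eps (J \<inter> L))"
    by (simp only: signs left right)
  also have "\<dots> = blade_sign eps I (symdiff J L) * blade_sign eps J L"
    unfolding blade_sign_eq power_add by (simp only: mult_ac)
  finally show ?thesis .
qed

lemma cl_mul_assoc: "cl_mul n eps (cl_mul n eps a b) c = cl_mul n eps a (cl_mul n eps b c)"
proof
  fix K
  let ?P = "Pow {..<n}" and ?s = "blade_sign eps"
  show "cl_mul n eps (cl_mul n eps a b) c K = cl_mul n eps a (cl_mul n eps b c) K"
  proof (cases "K \<subseteq> {..<n}")
    case False
    then show ?thesis by (simp add: cl_mul_apply)
  next
    case K: True
    have "cl_mul n eps (cl_mul n eps a b) c K =
      (\<Sum>M\<in>?P. \<Sum>I\<in>?P. ?s M (symdiff M K) * (?s I (symdiff I M) * a I * b (symdiff I M)) * c (symdiff M K))"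
      by (simp add: cl_mul_apply_in[OF K] cl_mul_apply_in[of _ n] sum_distrib_left sum_distrib_right)
    also have "\<dots> = (\<Sum>I\<in>?P. \<Sum>J\<in>?P. ?s (symdiff I J) (symdiff (symdiff I J) K) *
        (?s I J * a I * b J) * c (symdiff (symdiff I J) K))"
    proof (subst sum.swap, rule sum.cong[OF refl])
      fix I assume "I \<in> ?P"
      then show "(\<Sum>M\<in>?P. ?s M (symdiff M K) * (?s I (symdiff I M) * a I * b (symdiff I M)) * c (symdiff M K)) =
        (\<Sum>J\<in>?P. ?s (symdiff I J) (symdiff (symdiff I J) K) * (?s I J * a I * b J) * c (symdiff (symdiff I J) K))"
        using sum_Pow_symdiff_reindex[of I "{..<n}"
            "\<lambda>M. ?s M (symdiff M K) * (?s I (symdiff I M) * a I * b (symdiff I M)) * c (symdiff M K)"]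
        by simp
    qed
    also have "\<dots> = (\<Sum>I\<in>?P. \<Sum>J\<in>?P. ?s I (symdiff I K) * a I *
        (?s J (symdiff J (symdiff I K)) * b J * c (symdiff J (symdiff I K))))"
    proof (intro sum.cong refl)
      fix I J assume I: "I \<in> ?P" and J: "J \<in> ?P"
      define L where "L = symdiff (symdiff I J) K"
      have "symdiff J (symdiff I K) = L" "symdiff I K = symdiff J L"
        unfolding L_def by (simp_all add: symdiff_assoc symdiff_left_commute[of J I])
      moreover have "finite L"
        unfolding L_def using I J K by (auto intro: finite_subset_lessThan finite_symdiff)
      then have "?s I J * ?s (symdiff I J) L = ?s I (symdiff J L) * ?s J L"
        using I J by (intro blade_sign_cocycle) (auto intro: finite_subset_lessThan)
      ultimately show "?s (symdiff I J) (symdiff (symdiff I J) K) * (?s I J * a I * b J) *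
          c (symdiff (symdiff I J) K) = ?s I (symdiff I K) * a I *
          (?s J (symdiff J (symdiff I K)) * b J * c (symdiff J (symdiff I K)))"
        unfolding L_def[symmetric] by (simp add: mult_ac)
    qed
    also have "\<dots> = cl_mul n eps a (cl_mul n eps b c) K"
      using K by (simp add: cl_mul_apply_in symdiff_subset sum_distrib_left)
    finally show ?thesis .
  qed
qed

lemma CL_outside: "a \<in> CL n \<Longrightarrow> \<not> K \<subseteq> {..<n} \<Longrightarrow> a K = 0"
  unfolding CL_def by blast

lemma CL_I: "(\<And>K. \<not> K \<subseteq> {..<n} \<Longrightarrow> a K = 0) \<Longrightarrow> a \<in> CL n"
  unfolding CL_def by blast

lemma cl_mul_in_CL: "cl_mul n eps a b \<in> CL n"
  by (rule CL_I) (simp add: cl_mul_apply)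

lemma CL_scale: "a \<in> CL n \<Longrightarrow> cl_scale z a \<in> CL n"
  by (rule CL_I) (simp add: cl_scale_def CL_outside)

lemma CL_one: "cl_one \<in> CL n"
  by (rule CL_I) (auto simp: cl_one_def)

lemma CL_cl_sum: "(\<And>i. i \<in> A \<Longrightarrow> f i \<in> CL n) \<Longrightarrow> cl_sum f A \<in> CL n"
  by (rule CL_I) (auto simp: cl_sum_def intro!: sum.neutral CL_outside)

lemma blade_sign_empty [simp]: "blade_sign eps {} J = 1" "blade_sign eps I {} = 1"
  unfolding blade_sign_def by simp_all

lemma cl_mul_one_left: "b \<in> CL n \<Longrightarrow> cl_mul n eps cl_one b = b"
proof
  fix K assume b: "b \<in> CL n"
  have "(\<Sum>I\<in>Pow {..<n}. blade_sign eps I (symdiff I K) * cl_one I * b (symdiff I K)) =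
        (\<Sum>I\<in>Pow {..<n}. if I = {} then b K else 0)"
    by (rule sum.cong) (auto simp: cl_one_def)
  then show "cl_mul n eps cl_one b K = b K"
    by (simp add: cl_mul_apply CL_outside[OF b])
qed

lemma cl_mul_one_right: "b \<in> CL n \<Longrightarrow> cl_mul n eps b cl_one = b"
proof
  fix K assume b: "b \<in> CL n"
  have "symdiff I K = {} \<longleftrightarrow> I = K" for I
    unfolding symdiff_def by blast
  then show "cl_mul n eps b cl_one K = b K"
    by (auto simp: cl_mul_apply cl_one_def CL_outside[OF b] if_distrib[of "\<lambda>x. _ * x"]
        sum.delta' cong: if_cong)
qed

lemma cl_mul_add_left: "cl_mul n eps (cl_add a b) c = cl_add (cl_mul n eps a c) (cl_mul n eps b c)"
  by (rule ext) (simp add: cl_mul_apply cl_add_def sum.distrib algebra_simps)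

lemma cl_mul_add_right: "cl_mul n eps c (cl_add a b) = cl_add (cl_mul n eps c a) (cl_mul n eps c b)"
  by (rule ext) (simp add: cl_mul_apply cl_add_def sum.distrib algebra_simps)

lemma cl_mul_scale_left: "cl_mul n eps (cl_scale z a) c = cl_scale z (cl_mul n eps a c)"
  by (rule ext) (simp add: cl_mul_apply cl_scale_def sum_distrib_left algebra_simps)

lemma cl_mul_scale_right: "cl_mul n eps c (cl_scale z a) = cl_scale z (cl_mul n eps c a)"
  by (rule ext) (simp add: cl_mul_apply cl_scale_def sum_distrib_left algebra_simps)

lemma cl_scale_one [simp]: "cl_scale 1 x = x"
  unfolding cl_scale_def by simp

lemma cl_scale_scale: "cl_scale a (cl_scale b x) = cl_scale (a * b) x"
  unfolding cl_scale_def by (simp add: mult_ac)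

lemma tau_scale: "tau (cl_scale c a) = c * tau a"
  unfolding tau_def cl_scale_def by simp

lemma tau_add: "tau (cl_add a b) = tau a + tau b"
  unfolding tau_def cl_add_def by simp

lemma tau_one: "tau cl_one = 1"
  unfolding tau_def cl_one_def by simp

lemma tau_cl_sum: "tau (cl_sum f A) = (\<Sum>i\<in>A. tau (f i))"
  unfolding tau_def cl_sum_def ..

lemma cl_sum_cong: "(\<And>i. i \<in> A \<Longrightarrow> f i = g i) \<Longrightarrow> cl_sum f A = cl_sum g A"
  unfolding cl_sum_def by (intro ext sum.cong) auto

lemma cl_sum_insert: "finite A \<Longrightarrow> x \<notin> A \<Longrightarrow> cl_sum f (insert x A) = cl_add (f x) (cl_sum f A)"
  unfolding cl_sum_def cl_add_def by simp

lemma cl_mul_cl_sum_right: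
  "finite A \<Longrightarrow> cl_mul n eps x (cl_sum f A) = cl_sum (\<lambda>i. cl_mul n eps x (f i)) A"
  by (rule ext) (simp add: cl_mul_apply cl_sum_def sum_distrib_left algebra_simps sum.swap[of _ A])

definition reversion_sign :: "nat set \<Rightarrow> complex" where
  "reversion_sign K = (-1) ^ (card K choose 2)"

lemma cl_transpose_apply: "cl_transpose a K = reversion_sign K * a K"
  unfolding cl_transpose_def reversion_sign_def by (simp add: choose_two)

lemma int_choose_two: "2 * int (m choose 2) = int m * (int m - 1)"
proof -
  have "2 * (m choose 2) = m * (m - 1)"
    unfolding choose_two by (cases "even m") auto
  then show ?thesis by (cases m) (simp_all add: algebra_simps flip: of_nat_mult)
qed

lemma even_choose_two_sum:
  assumes "x + y + c = (c + p) * (c + q)"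
  shows "even (((p + q) choose 2) + x + (((c + p) choose 2) + ((c + q) choose 2) + y))"
proof -
  define N where "N = ((p + q) choose 2) + x + (((c + p) choose 2) + ((c + q) choose 2) + y)"
  have xy: "int x + int y = (int c + int p) * (int c + int q) - int c"
    using arg_cong[OF assms, of int] by simp
  have "2 * int N = 2 * (2 * (int c * int c + int p * int q + int c * int p + int c * int q - int c)
                    + int p * (int p - 1) + int q * (int q - 1))"
    unfolding N_def using int_choose_two[of "p + q"] int_choose_two[of "c + p"]
      int_choose_two[of "c + q"] xy by (simp add: algebra_simps)
  moreover have "even (int m * (int m - 1))" for m
    by (cases "even m") auto
  ultimately have "even (int N)"
    by (metis dvd_add mult_cancel_left zero_neq_numeral dvd_triv_left)
  then show ?thesis unfolding N_def by simp
qed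

lemma card_symdiff:
  assumes "finite I" "finite J"
  shows "card (symdiff I J) + 2 * card (I \<inter> J) = card I + card J"
proof -
  have "card (symdiff I J) = card (I - J) + card (J - I)"
    unfolding symdiff_def using assms by (intro card_Un_disjoint) auto
  then show ?thesis
    using card_Int_Diff[of I J] card_Int_Diff[of J I] assms by (simp add: Int_commute)
qed

lemma inversions_swap:
  assumes "finite I" "finite J"
  shows "inversions I J + inversions J I + card (I \<inter> J) = card I * card J"
proof -
  let ?A = "{(i, j). i \<in> I \<and> j \<in> J \<and> j < i}"
  let ?B = "{(i, j). i \<in> I \<and> j \<in> J \<and> i < j}"
  let ?D = "{(i, j). i \<in> I \<and> j \<in> J \<and> i = j}"
  have fin: "finite ?A" "finite ?B" "finite ?D"
    by (rule finite_subset[of _ "I \<times> J"], use assms in auto)+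
  have "I \<times> J = ?A \<union> ?B \<union> ?D" by auto
  moreover have "card (?A \<union> ?B \<union> ?D) = card (?A \<union> ?B) + card ?D"
    by (rule card_Un_disjoint) (use fin in auto)
  moreover have "card (?A \<union> ?B) = card ?A + card ?B"
    by (rule card_Un_disjoint) (use fin in auto)
  ultimately have "card I * card J = card ?A + card ?B + card ?D"
    by (metis card_cartesian_product)
  moreover have "card ?B = inversions J I"
    unfolding inversions_def
    by (rule bij_betw_same_card[of "\<lambda>(i, j). (j, i)"]) (auto simp: bij_betw_def inj_on_def)
  moreover have "card ?D = card (I \<inter> J)"
    by (rule bij_betw_same_card[of "\<lambda>(i, j). i"]) (auto simp: bij_betw_def inj_on_def image_def)
  ultimately show ?thesis unfolding inversions_def by simp
qed

text \<open>The identity (e_I e_J)^T = e_J^T e_I^T for basis blades, written out in signs.\<close>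
lemma reversion_sign_blade_sign:
  assumes "finite I" "finite J"
  shows "reversion_sign (symdiff I J) * blade_sign eps I J =
         reversion_sign I * reversion_sign J * blade_sign eps J I"
proof -
  define c p q where "c = card (I \<inter> J)" and "p = card I - c" and "q = card J - c"
  have cI: "card I = c + p" and cJ: "card J = c + q"
    unfolding p_def q_def c_def using assms by (simp_all add: card_mono)
  have "card (symdiff I J) = p + q"
    using card_symdiff[OF assms] cI cJ c_def by simp
  moreover have "inversions I J + inversions J I + c = (c + p) * (c + q)"
    using inversions_swap[OF assms] cI cJ c_def by simp
  then have "(-1::complex) ^ (((p + q) choose 2) + inversions I J) =
             (-1) ^ (((c + p) choose 2) + ((c + q) choose 2) + inversions J I)"
    by (intro neg_one_power_eq_if_even_add) (use even_choose_two_sum in \<open>simp add: add.assoc\<close>)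
  ultimately show ?thesis
    unfolding reversion_sign_def blade_sign_eq cI cJ power_add by (simp add: Int_commute mult_ac)
qed

lemma cl_transpose_mul:
  "cl_transpose (cl_mul n eps a b) = cl_mul n eps (cl_transpose b) (cl_transpose a)"
proof
  fix K
  let ?r = reversion_sign and ?s = "blade_sign eps"
  show "cl_transpose (cl_mul n eps a b) K = cl_mul n eps (cl_transpose b) (cl_transpose a) K"
  proof (cases "K \<subseteq> {..<n}")
    case False
    then show ?thesis by (simp add: cl_mul_apply cl_transpose_apply)
  next
    case True
    have "cl_transpose (cl_mul n eps a b) K =
          (\<Sum>I\<in>Pow {..<n}. ?r (symdiff I (symdiff I K)) * ?s I (symdiff I K) * a I * b (symdiff I K))"
      by (simp add: cl_transpose_apply cl_mul_apply_in[OF True] sum_distrib_left mult_ac)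
    also have "\<dots> = (\<Sum>I\<in>Pow {..<n}. ?r I * ?r (symdiff I K) * ?s (symdiff I K) I * a I * b (symdiff I K))"
    proof (rule sum.cong[OF refl])
      fix I assume "I \<in> Pow {..<n}"
      then have "finite I" "finite (symdiff I K)"
        using True by (auto intro: finite_subset_lessThan finite_symdiff)
      from reversion_sign_blade_sign[OF this, of eps]
      show "?r (symdiff I (symdiff I K)) * ?s I (symdiff I K) * a I * b (symdiff I K) =
            ?r I * ?r (symdiff I K) * ?s (symdiff I K) I * a I * b (symdiff I K)"
        by simp
    qed
    also have "\<dots> = (\<Sum>J\<in>Pow {..<n}. ?r (symdiff J K) * ?r J * ?s J (symdiff J K) * a (symdiff J K) * b J)"
      using sum_Pow_symdiff_reindex[OF True,
          of "\<lambda>I. ?r I * ?r (symdiff I K) * ?s (symdiff I K) I * a I * b (symdiff I K)"]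
      by (simp add: symdiff_commute[of K] symdiff_assoc)
    also have "\<dots> = cl_mul n eps (cl_transpose b) (cl_transpose a) K"
      by (simp add: cl_mul_apply_in[OF True] cl_transpose_apply symdiff_assoc mult_ac)
    finally show ?thesis .
  qed
qed

lemma cl_transpose_add: "cl_transpose (cl_add a b) = cl_add (cl_transpose a) (cl_transpose b)"
  unfolding cl_transpose_def cl_add_def by (simp add: algebra_simps)

lemma cl_transpose_scale: "cl_transpose (cl_scale z a) = cl_scale z (cl_transpose a)"
  unfolding cl_transpose_def cl_scale_def by (simp add: algebra_simps)

lemma cl_transpose_cl_sum: "cl_transpose (cl_sum f A) = cl_sum (\<lambda>i. cl_transpose (f i)) A"
  unfolding cl_transpose_def cl_sum_def by (simp add: sum_distrib_left)

lemma cl_transpose_in_CL: "a \<in> CL n \<Longrightarrow> cl_transpose a \<in> CL n"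
  by (rule CL_I) (simp add: cl_transpose_def CL_outside)

lemma tau_transpose: "tau (cl_transpose a) = tau a"
  unfolding tau_def cl_transpose_def by simp

lemma cl_transpose_one: "cl_transpose cl_one = cl_one"
  unfolding cl_transpose_def cl_one_def by auto

lemma cl_transpose_transpose: "cl_transpose (cl_transpose a) = a"
  by (rule ext) (simp add: cl_transpose_apply reversion_sign_def flip: power_add mult_2)

lemma cl_prod_Nil [simp]: "cl_prod n eps [] = cl_one"
  unfolding cl_prod_def by simp

lemma cl_prod_Cons [simp]: "cl_prod n eps (w # ws) = cl_mul n eps w (cl_prod n eps ws)"
  unfolding cl_prod_def by simp

lemma cl_prod_in_CL: "cl_prod n eps ws \<in> CL n"
  by (cases ws) (auto simp: CL_one cl_mul_in_CL)

lemma cl_prod_append: "cl_prod n eps (xs @ ys) = cl_mul n eps (cl_prod n eps xs) (cl_prod n eps ys)"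
  by (induction xs) (auto simp: cl_mul_one_left cl_prod_in_CL cl_mul_assoc)

lemma cl_transpose_cl_prod:
  "set ws \<subseteq> CL n \<Longrightarrow> cl_transpose (cl_prod n eps ws) = cl_prod n eps (rev (map cl_transpose ws))"
  by (induction ws)
    (auto simp: cl_transpose_one cl_transpose_mul cl_prod_append cl_mul_one_right cl_transpose_in_CL)

definition basis_blade :: "nat set \<Rightarrow> cl" where
  "basis_blade K = (\<lambda>I. if I = K then 1 else 0)"

definition basis_vector :: "nat \<Rightarrow> cl" where
  "basis_vector i = basis_blade {i}"

lemma basis_blade_in_CL: "K \<subseteq> {..<n} \<Longrightarrow> basis_blade K \<in> CL n"
  unfolding CL_def basis_blade_def by auto

lemma basis_blade_empty: "basis_blade {} = cl_one"
  unfolding basis_blade_def cl_one_def ..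

lemma cl_mul_basis_blade:
  assumes "I \<subseteq> {..<n}" "J \<subseteq> {..<n}"
  shows "cl_mul n eps (basis_blade I) (basis_blade J) = cl_scale (blade_sign eps I J) (basis_blade (symdiff I J))"
proof
  fix K
  show "cl_mul n eps (basis_blade I) (basis_blade J) K = cl_scale (blade_sign eps I J) (basis_blade (symdiff I J)) K"
  proof (cases "K \<subseteq> {..<n}")
    case True
    have "cl_mul n eps (basis_blade I) (basis_blade J) K =
          (\<Sum>I'\<in>Pow {..<n}. if I' = I then blade_sign eps I (symdiff I K) * basis_blade J (symdiff I K) else 0)"
      unfolding cl_mul_apply_in[OF True] by (rule sum.cong) (auto simp: basis_blade_def)
    then show ?thesis
      using assms symdiff_eq_iff[of I J K] by (auto simp: cl_scale_def basis_blade_def)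
  next
    case False
    then have "symdiff I J \<noteq> K" using symdiff_subset[OF assms] by blast
    then show ?thesis using False by (simp add: cl_mul_apply cl_scale_def basis_blade_def)
  qed
qed

lemma cl_prod_basis_vector_sorted:
  "sorted_wrt (<) L \<Longrightarrow> set L \<subseteq> {..<n} \<Longrightarrow> cl_prod n eps (map basis_vector L) = basis_blade (set L)"
proof (induction L)
  case Nil
  then show ?case by (simp add: basis_blade_empty)
next
  case (Cons i L)
  then have less: "\<forall>j\<in>set L. i < j" by simp
  then have "{(i', j). i' \<in> {i} \<and> j \<in> set L \<and> j < i'} = {}" "{i} \<inter> set L = {}"
    by auto
  then have "blade_sign eps {i} (set L) = 1"
    unfolding blade_sign_def by (simp only:) simp
  moreover have "symdiff {i} (set L) = insert i (set L)"
    using less unfolding symdiff_def by auto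
  ultimately show ?case
    using Cons cl_mul_basis_blade[of "{i}" n "set L" eps]
    by (simp add: basis_vector_def cl_scale_def)
qed

lemma basis_blade_eq_cl_prod:
  "K \<subseteq> {..<n} \<Longrightarrow> basis_blade K = cl_prod n eps (map basis_vector (sorted_list_of_set K))"
  using cl_prod_basis_vector_sorted[of "sorted_list_of_set K" n eps] finite_subset_lessThan
  by auto

lemma CL_eq_sum_basis_blade:
  assumes "a \<in> CL n"
  shows "a = cl_sum (\<lambda>K. cl_scale (a K) (basis_blade K)) (Pow {..<n})"
proof
  fix I
  show "a I = cl_sum (\<lambda>K. cl_scale (a K) (basis_blade K)) (Pow {..<n}) I"
    using CL_outside[OF assms, of I]
    by (cases "I \<subseteq> {..<n}") (auto simp: cl_sum_def cl_scale_def basis_blade_def if_distrib[of "\<lambda>x. _ * x"] cong: if_cong)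
qed

lemma VC_in_CL: "v \<in> VC n \<Longrightarrow> v \<in> CL n"
  unfolding VC_def by blast

lemma VC_coeff_nonzero: "v \<in> VC n \<Longrightarrow> v I \<noteq> 0 \<Longrightarrow> card I = 1 \<and> I \<subseteq> {..<n}"
  unfolding VC_def CL_def by blast

lemma cl_transpose_VC: "v \<in> VC n \<Longrightarrow> cl_transpose v = v"
  by (rule ext) (auto simp: cl_transpose_def dest: VC_coeff_nonzero)

lemma sum_Pow_singletons:
  fixes n :: nat
  assumes "\<And>I. I \<subseteq> {..<n} \<Longrightarrow> f I \<noteq> 0 \<Longrightarrow> card I = 1"
  shows "(\<Sum>I\<in>Pow {..<n}. f I) = (\<Sum>i<n. f {i})"
proof -
  have "(\<Sum>i<n. f {i}) = sum f ((\<lambda>i. {i}) ` {..<n})"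
    by (subst sum.reindex) (auto simp: inj_on_def)
  also have "\<dots> = (\<Sum>I\<in>Pow {..<n}. f I)"
    by (rule sum.mono_neutral_left) (use assms in \<open>auto simp: card_Suc_eq\<close>)
  finally show ?thesis ..
qed

lemma blade_sign_singletons:
  "blade_sign eps {i} {j} = (if i = j then complex_of_real (eps i) else if j < i then -1 else 1)"
proof -
  have "{(a, b). a \<in> {i} \<and> b \<in> {j} \<and> b < a} = (if j < i then {(i, j)} else {})"
    by auto
  then show ?thesis
    unfolding blade_sign_def by auto
qed

lemma cl_mul_VC_apply:
  assumes "v \<in> VC n" "w \<in> VC n"
  shows "cl_mul n eps v w K =
    (\<Sum>i<n. \<Sum>j<n. if symdiff {i} {j} = K then blade_sign eps {i} {j} * v {i} * w {j} else 0)"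
proof -
  have "cl_mul n eps v w K = (\<Sum>I\<in>Pow {..<n}. \<Sum>J\<in>Pow {..<n}.
          if symdiff I J = K then blade_sign eps I J * v I * w J else 0)"
    unfolding cl_mul_def symdiff_def ..
  also have "\<dots> = (\<Sum>i<n. \<Sum>j<n. if symdiff {i} {j} = K then blade_sign eps {i} {j} * v {i} * w {j} else 0)"
    by (subst sum_Pow_singletons, use VC_coeff_nonzero[OF assms(1)] in \<open>force intro!: sum.neutral\<close>,
        intro sum.cong refl sum_Pow_singletons) (auto dest: VC_coeff_nonzero[OF assms(2)] split: if_splits)
  finally show ?thesis .
qed

lemma VC_anticommute:
  assumes "v \<in> VC n" "w \<in> VC n"
  shows "cl_add (cl_mul n eps v w) (cl_mul n eps w v) = cl_scale (2 * clB n eps v w) cl_one"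
proof
  fix K
  let ?s = "blade_sign eps"
  have "cl_add (cl_mul n eps v w) (cl_mul n eps w v) K =
     (\<Sum>i<n. \<Sum>j<n. if symdiff {i} {j} = K then (?s {i} {j} + ?s {j} {i}) * v {i} * w {j} else 0)"
    unfolding cl_add_def cl_mul_VC_apply[OF assms] cl_mul_VC_apply[OF assms(2,1)]
    by (subst (2) sum.swap) (simp add: sum.distrib[symmetric] symdiff_commute algebra_simps
        if_distrib[of "\<lambda>x. x + _"] cong: if_cong)
  also have "\<dots> = (\<Sum>i<n. \<Sum>j<n. if j = i \<and> K = {} then 2 * complex_of_real (eps i) * v {i} * w {i} else 0)"
    by (intro sum.cong refl) (auto simp: blade_sign_singletons symdiff_def)
  also have "\<dots> = cl_scale (2 * clB n eps v w) cl_one K"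
    by (simp add: clB_def cl_scale_def cl_one_def sum_distrib_left mult_ac)
  finally show "cl_add (cl_mul n eps v w) (cl_mul n eps w v) K = cl_scale (2 * clB n eps v w) cl_one K" .
qed

lemma tau_mul_VC:
  assumes "v \<in> VC n" "w \<in> VC n"
  shows "tau (cl_mul n eps v w) = clB n eps v w"
proof -
  have "tau (cl_mul n eps v w) = (\<Sum>i<n. blade_sign eps {i} {i} * v {i} * w {i})"
    unfolding tau_cl_mul by (rule sum_Pow_singletons) (use VC_coeff_nonzero[OF assms(1)] in force)
  then show ?thesis unfolding clB_def blade_sign_singletons by simp
qed

lemma VC_square:
  assumes "v \<in> VC n"
  shows "cl_mul n eps v v = cl_scale (clQ n eps v) cl_one"
proof
  fix K
  show "cl_mul n eps v v K = cl_scale (clQ n eps v) cl_one K"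
    using fun_cong[OF VC_anticommute[OF assms assms, of eps], of K]
    unfolding cl_add_def cl_scale_def clQ_def by simp
qed

lemma VC_anticommute_orthogonal:
  assumes "v \<in> VC n" "w \<in> VC n" "clB n eps v w = 0"
  shows "cl_mul n eps v w = cl_scale (-1) (cl_mul n eps w v)"
proof
  fix K
  show "cl_mul n eps v w K = cl_scale (-1) (cl_mul n eps w v) K"
    using fun_cong[OF VC_anticommute[OF assms(1,2), of eps], of K] assms(3)
    unfolding cl_add_def cl_scale_def by (simp add: add_eq_0_iff)
qed

lemma basis_vector_in_VC: "i < n \<Longrightarrow> basis_vector i \<in> VC n"
  unfolding VC_def CL_def basis_vector_def basis_blade_def by auto

lemma clB_basis_vector:
  "i < n \<Longrightarrow> j < n \<Longrightarrow> clB n eps (basis_vector i) (basis_vector j) = (if i = j then complex_of_real (eps i) else 0)"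
proof -
  assume "i < n" "j < n"
  have "clB n eps (basis_vector i) (basis_vector j) =
        (\<Sum>k<n. if k = i then (if i = j then complex_of_real (eps i) else 0) else 0)"
    unfolding clB_def basis_vector_def basis_blade_def by (intro sum.cong refl) auto
  then show ?thesis using \<open>i < n\<close> by simp
qed

lemma cl_transpose_cl_prod_VC:
  "set ws \<subseteq> VC n \<Longrightarrow> cl_transpose (cl_prod n eps ws) = cl_prod n eps (rev ws)"
  using cl_transpose_cl_prod[of ws n eps] VC_in_CL cl_transpose_VC
  by (metis map_idI subset_code(1))

lemma cl_prod_rev_mul_cl_prod:
  "set ws \<subseteq> VC n \<Longrightarrow>
   cl_mul n eps (cl_prod n eps (rev ws)) (cl_prod n eps ws) = cl_scale (\<Prod>w\<leftarrow>ws. clQ n eps w) cl_one"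
proof (induction ws)
  case Nil
  then show ?case by (simp add: cl_mul_one_left CL_one)
next
  case (Cons w ws)
  let ?R = "cl_prod n eps (rev ws)" and ?P = "cl_prod n eps ws"
  have w: "w \<in> VC n" using Cons.prems by simp
  have "cl_mul n eps (cl_prod n eps (rev (w # ws))) (cl_prod n eps (w # ws)) =
        cl_mul n eps ?R (cl_mul n eps (cl_mul n eps w w) ?P)"
    by (simp add: cl_prod_append cl_mul_one_right[OF VC_in_CL[OF w]] cl_mul_assoc)
  also have "\<dots> = cl_scale (clQ n eps w) (cl_mul n eps ?R ?P)"
    by (simp add: VC_square[OF w] cl_mul_scale_left cl_mul_scale_right cl_mul_one_left cl_prod_in_CL)
  finally show ?case
    using Cons by (simp add: cl_scale_scale)
qed

lemma cl_mul_cl_prod_commute: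
  assumes "u \<in> CL n" "\<And>i. i \<in> set L \<Longrightarrow> cl_mul n eps u (g i) = cl_scale (s i) (cl_mul n eps (g i) u)"
  shows "cl_mul n eps u (cl_prod n eps (map g L)) =
         cl_scale (\<Prod>i\<leftarrow>L. s i) (cl_mul n eps (cl_prod n eps (map g L)) u)"
  using assms(2)
proof (induction L)
  case Nil
  then show ?case using assms(1) by (simp add: cl_mul_one_left cl_mul_one_right)
next
  case (Cons i L)
  let ?P = "cl_prod n eps (map g L)"
  have "cl_mul n eps u (cl_prod n eps (map g (i # L))) = cl_mul n eps (cl_mul n eps u (g i)) ?P"
    by (simp add: cl_mul_assoc)
  also have "\<dots> = cl_scale (s i) (cl_mul n eps (g i) (cl_mul n eps u ?P))"
    using Cons.prems by (simp add: cl_mul_scale_left cl_mul_assoc)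
  also have "\<dots> = cl_scale (\<Prod>i\<leftarrow>i # L. s i) (cl_mul n eps (cl_prod n eps (map g (i # L))) u)"
    using Cons by (simp add: cl_mul_scale_right cl_scale_scale cl_mul_assoc)
  finally show ?case .
qed

text \<open>Conjugation by u multiplies p by S but preserves the trace.\<close>
lemma tau_eq_zero_if_skew_commute:
  assumes "u \<in> CL n" "p \<in> CL n" "cl_mul n eps u u = cl_scale c cl_one" "c \<noteq> 0"
    and "cl_mul n eps u p = cl_scale S (cl_mul n eps p u)" "S \<noteq> 1"
  shows "tau p = 0"
proof -
  have "c * tau p = tau (cl_mul n eps p (cl_mul n eps u u))"
    using assms(2,3) by (simp add: cl_mul_scale_right cl_mul_one_right tau_scale)
  also have "\<dots> = tau (cl_mul n eps u (cl_mul n eps p u))"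
    by (simp add: cl_mul_assoc[symmetric] tau_cl_mul_commute[of n eps _ u])
  also have "\<dots> = S * (c * tau p)"
    using assms(2,3,5)
    by (simp add: cl_mul_assoc[symmetric] cl_mul_scale_left tau_scale)
      (simp add: cl_mul_assoc cl_mul_scale_right cl_mul_one_right tau_scale)
  finally have "(1 - S) * (c * tau p) = 0" by (simp add: algebra_simps)
  then show ?thesis using assms(4,6) by simp
qed

definition anticommuting_frame :: "nat \<Rightarrow> (nat \<Rightarrow> real) \<Rightarrow> (nat \<Rightarrow> cl) \<Rightarrow> bool" where
  "anticommuting_frame n eps g \<longleftrightarrow>
     (\<forall>i<n. g i \<in> CL n \<and> (\<exists>c. c \<noteq> 0 \<and> cl_mul n eps (g i) (g i) = cl_scale c cl_one)) \<and>
     (\<forall>i<n. \<forall>j<n. i \<noteq> j \<longrightarrow> cl_mul n eps (g i) (g j) = cl_scale (-1) (cl_mul n eps (g j) (g i)))"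

lemma anticommuting_frameD:
  assumes "anticommuting_frame n eps g" "i < n"
  shows "g i \<in> CL n" "\<exists>c. c \<noteq> 0 \<and> cl_mul n eps (g i) (g i) = cl_scale c cl_one"
    and "j < n \<Longrightarrow> i \<noteq> j \<Longrightarrow> cl_mul n eps (g i) (g j) = cl_scale (-1) (cl_mul n eps (g j) (g i))"
  using assms unfolding anticommuting_frame_def by blast+

lemma anticommuting_frame_VC:
  assumes "\<And>i. i < n \<Longrightarrow> g i \<in> VC n" "\<And>i. i < n \<Longrightarrow> clQ n eps (g i) \<noteq> 0"
    and "\<And>i j. i < n \<Longrightarrow> j < n \<Longrightarrow> i \<noteq> j \<Longrightarrow> clB n eps (g i) (g j) = 0"
  shows "anticommuting_frame n eps g"
  unfolding anticommuting_frame_def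
  using assms by (auto intro: VC_in_CL VC_square VC_anticommute_orthogonal)

lemma anticommuting_frame_basis_vector:
  "(\<And>i. i < n \<Longrightarrow> eps i \<noteq> 0) \<Longrightarrow> anticommuting_frame n eps basis_vector"
  by (rule anticommuting_frame_VC) (simp_all add: basis_vector_in_VC clQ_def clB_basis_vector)

text \<open>The only place where the parity of n enters: if |I| + |J| is odd, some j < n lies in
  both or neither of I, J, which needs I \<triangle> J \<noteq> {..<n}.\<close>
lemma exists_index_odd_card_Diff:
  fixes I J :: "nat set"
  assumes "even n" "I \<subseteq> {..<n}" "J \<subseteq> {..<n}" "I \<noteq> J"
  shows "\<exists>j<n. odd (card (I - {j}) + card (J - {j}))"
proof -
  have fin: "finite I" "finite J"
    using assms(2,3) finite_subset_lessThan by blast+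
  show ?thesis
  proof (cases "even (card I + card J)")
    case True
    obtain j where j: "j \<in> symdiff I J"
      using assms(4) unfolding symdiff_def by blast
    then have "j < n" using symdiff_subset[OF assms(2,3)] by auto
    moreover have "card I + card J = card (I - {j}) + card (J - {j}) + 1"
      using j fin card.remove[of I j] card.remove[of J j] unfolding symdiff_def by auto
    ultimately show ?thesis using True by auto
  next
    case False
    have "symdiff I J \<noteq> {..<n}"
    proof
      assume "symdiff I J = {..<n}"
      then have "even (card (symdiff I J) + 2 * card (I \<inter> J))" using assms(1) by simp
      then show False using False card_symdiff[OF fin] by simp
    qed
    then obtain j where "j < n" "j \<notin> symdiff I J"
      using symdiff_subset[OF assms(2,3)] by blast
    then have "j \<in> I \<longleftrightarrow> j \<in> J" unfolding symdiff_def by blast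
    then have "card I + card J = card (I - {j}) + card (J - {j}) + (if j \<in> I then 2 else 0)"
      using fin card.remove[of I j] card.remove[of J j] by auto
    with \<open>j < n\<close> False show ?thesis by (cases "j \<in> I") auto
  qed
qed

lemma length_filter_sorted_list_of_set:
  "finite X \<Longrightarrow> length (filter P (sorted_list_of_set X)) = card {x\<in>X. P x}"
  by (metis distinct_card distinct_filter distinct_sorted_list_of_set set_filter set_sorted_list_of_set)

lemma prod_list_sign_filter:
  "(\<Prod>i\<leftarrow>L. if i = j then 1 else -1) = (-1::complex) ^ length (filter (\<lambda>i. i \<noteq> j) L)"
  by (induction L) auto

lemma tau_cl_prod_anticommuting_frame:
  assumes "even n" "anticommuting_frame n eps g" "I \<subseteq> {..<n}" "J \<subseteq> {..<n}" "I \<noteq> J"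
  shows "tau (cl_prod n eps (map g (rev (sorted_list_of_set I) @ sorted_list_of_set J))) = 0"
proof -
  let ?L = "rev (sorted_list_of_set I) @ sorted_list_of_set J"
  have fin: "finite I" "finite J"
    using assms(3,4) finite_subset_lessThan by blast+
  obtain j where j: "j < n" and odd: "odd (card (I - {j}) + card (J - {j}))"
    using exists_index_odd_card_Diff[OF assms(1,3,4,5)] by blast
  obtain c where "c \<noteq> 0" "cl_mul n eps (g j) (g j) = cl_scale c cl_one" "g j \<in> CL n"
    using anticommuting_frameD[OF assms(2) j] by blast
  moreover have "cl_mul n eps (g j) (g i) = cl_scale (if i = j then 1 else -1) (cl_mul n eps (g i) (g j))"
    if "i \<in> set ?L" for i
  proof -
    have "i < n" using that assms(3,4) fin by auto
    with j show ?thesis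
      using anticommuting_frameD(3)[OF assms(2) j] by (cases "i = j") simp_all
  qed
  then have "cl_mul n eps (g j) (cl_prod n eps (map g ?L)) =
    cl_scale (\<Prod>i\<leftarrow>?L. if i = j then 1 else -1) (cl_mul n eps (cl_prod n eps (map g ?L)) (g j))"
    using \<open>g j \<in> CL n\<close> by (intro cl_mul_cl_prod_commute)
  moreover have "(\<Prod>i\<leftarrow>?L. if i = j then 1 else -1) = (-1::complex) ^ length (filter (\<lambda>i. i \<noteq> j) ?L)"
    by (rule prod_list_sign_filter)
  moreover have "length (filter (\<lambda>i. i \<noteq> j) ?L) = card (I - {j}) + card (J - {j})"
    using fin by (simp add: rev_filter[symmetric] length_filter_sorted_list_of_set set_diff_eq)
  ultimately show ?thesis
    using odd by (intro tau_eq_zero_if_skew_commute[where u = "g j"]) (auto simp: cl_prod_in_CL)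
qed

lemma anticommuting_frame_pon_basis:
  "pon_basis_Vsigma n eps \<sigma> e \<Longrightarrow> anticommuting_frame n eps e"
  unfolding pon_basis_Vsigma_def V_sigma_def
  by (rule anticommuting_frame_VC) force+

locale clifford_real_structure =
  fixes n :: nat and eps :: "nat \<Rightarrow> real" and \<sigma> :: "cl \<Rightarrow> cl"
  assumes even_dim: "even n"
    and eps_nonzero: "\<And>i. i < n \<Longrightarrow> eps i \<noteq> 0"
    and real_structure: "real_structure n eps \<sigma>"
begin

lemma
  shows \<sigma>_in_CL: "a \<in> CL n \<Longrightarrow> \<sigma> a \<in> CL n"
    and \<sigma>_involutive: "a \<in> CL n \<Longrightarrow> \<sigma> (\<sigma> a) = a"
    and \<sigma>_add: "a \<in> CL n \<Longrightarrow> b \<in> CL n \<Longrightarrow> \<sigma> (cl_add a b) = cl_add (\<sigma> a) (\<sigma> b)"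
    and \<sigma>_scale: "a \<in> CL n \<Longrightarrow> \<sigma> (cl_scale c a) = cl_scale (cnj c) (\<sigma> a)"
    and \<sigma>_mul: "a \<in> CL n \<Longrightarrow> b \<in> CL n \<Longrightarrow> \<sigma> (cl_mul n eps a b) = cl_mul n eps (\<sigma> a) (\<sigma> b)"
    and \<sigma>_one: "\<sigma> cl_one = cl_one"
    and \<sigma>_VC: "v \<in> VC n \<Longrightarrow> \<sigma> v \<in> VC n"
  using real_structure unfolding real_structure_def by blast+

lemma \<sigma>_zero: "\<sigma> cl_zero = cl_zero"
  using \<sigma>_scale[OF CL_one, of 0] by (simp add: cl_scale_def cl_zero_def)

lemma \<sigma>_cl_sum_scale:
  assumes "finite A" "\<And>i. i \<in> A \<Longrightarrow> f i \<in> CL n"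
  shows "\<sigma> (cl_sum (\<lambda>i. cl_scale (c i) (f i)) A) = cl_sum (\<lambda>i. cl_scale (cnj (c i)) (\<sigma> (f i))) A"
  using assms
proof (induction A rule: finite_induct)
  case empty
  then show ?case
    using \<sigma>_zero by (simp add: cl_sum_def cl_zero_def)
next
  case (insert x A)
  then show ?case
    by (simp add: cl_sum_insert \<sigma>_add \<sigma>_scale CL_scale CL_cl_sum)
qed

lemma \<sigma>_cl_prod: "set ws \<subseteq> CL n \<Longrightarrow> \<sigma> (cl_prod n eps ws) = cl_prod n eps (map \<sigma> ws)"
  by (induction ws) (auto simp: \<sigma>_one \<sigma>_mul cl_prod_in_CL)

lemma anticommuting_frame_\<sigma>:
  assumes "anticommuting_frame n eps g"
  shows "anticommuting_frame n eps (\<lambda>i. \<sigma> (g i))"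
  unfolding anticommuting_frame_def
proof (intro conjI allI impI)
  fix i assume i: "i < n"
  note g = anticommuting_frameD[OF assms i]
  show "\<sigma> (g i) \<in> CL n" using g(1) by (rule \<sigma>_in_CL)
  obtain c where "c \<noteq> 0" "cl_mul n eps (g i) (g i) = cl_scale c cl_one"
    using g(2) by blast
  then show "\<exists>c. c \<noteq> 0 \<and> cl_mul n eps (\<sigma> (g i)) (\<sigma> (g i)) = cl_scale c cl_one"
    using g(1) by (intro exI[of _ "cnj c"]) (simp add: \<sigma>_mul[symmetric] \<sigma>_scale CL_one \<sigma>_one)
  fix j assume "j < n" "i \<noteq> j"
  then show "cl_mul n eps (\<sigma> (g i)) (\<sigma> (g j)) = cl_scale (-1) (cl_mul n eps (\<sigma> (g j)) (\<sigma> (g i)))"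
    using g(1,3) anticommuting_frameD(1)[OF assms \<open>j < n\<close>]
    by (simp add: \<sigma>_mul[symmetric] \<sigma>_scale cl_mul_in_CL)
qed

text \<open>Since \<sigma> is an automorphism, \<sigma>(e_K) is a product of the anticommuting \<sigma>(e_i).\<close>
lemma tau_\<sigma>_basis_blade:
  assumes "K \<subseteq> {..<n}" "K \<noteq> {}"
  shows "tau (\<sigma> (basis_blade K)) = 0"
proof -
  have "set (map basis_vector (sorted_list_of_set K)) \<subseteq> CL n"
    using assms(1) finite_subset_lessThan[OF assms(1)] by (auto intro: VC_in_CL basis_vector_in_VC)
  then have \<sigma>_blade: "\<sigma> (basis_blade K) = cl_prod n eps (map (\<lambda>i. \<sigma> (basis_vector i)) (rev (sorted_list_of_set {}) @ sorted_list_of_set K))"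
    unfolding basis_blade_eq_cl_prod[OF assms(1), of eps] by (simp add: \<sigma>_cl_prod comp_def)
  have "tau (cl_prod n eps (map (\<lambda>i. \<sigma> (basis_vector i)) (rev (sorted_list_of_set {}) @ sorted_list_of_set K))) = 0"
    using assms eps_nonzero
    by (intro tau_cl_prod_anticommuting_frame even_dim anticommuting_frame_\<sigma> anticommuting_frame_basis_vector) auto
  with \<sigma>_blade show ?thesis by simp
qed

lemma tau_\<sigma>: "a \<in> CL n \<Longrightarrow> tau (\<sigma> a) = cnj (tau a)"
proof -
  assume a: "a \<in> CL n"
  have "\<sigma> a = cl_sum (\<lambda>K. cl_scale (cnj (a K)) (\<sigma> (basis_blade K))) (Pow {..<n})"
    using arg_cong[OF CL_eq_sum_basis_blade[OF a], of \<sigma>] \<sigma>_cl_sum_scale[of "Pow {..<n}" basis_blade a]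
    by (simp add: basis_blade_in_CL)
  then have "tau (\<sigma> a) = (\<Sum>K\<in>Pow {..<n}. cnj (a K) * tau (\<sigma> (basis_blade K)))"
    by (simp add: tau_cl_sum tau_scale)
  also have "\<dots> = (\<Sum>K\<in>Pow {..<n}. if K = {} then cnj (a {}) else 0)"
    by (rule sum.cong) (auto simp: tau_\<sigma>_basis_blade basis_blade_empty \<sigma>_one tau_one)
  finally show ?thesis unfolding tau_def by simp
qed

lemma \<sigma>_transpose_basis_blade:
  assumes "K \<subseteq> {..<n}"
  shows "\<sigma> (cl_transpose (basis_blade K)) = cl_transpose (\<sigma> (basis_blade K))"
proof -
  let ?L = "sorted_list_of_set K"
  have "set (map basis_vector ?L) \<subseteq> VC n" "set (map (\<lambda>i. \<sigma> (basis_vector i)) ?L) \<subseteq> VC n"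
    using assms finite_subset_lessThan[OF assms] by (auto intro: basis_vector_in_VC \<sigma>_VC)
  then show ?thesis
    unfolding basis_blade_eq_cl_prod[OF assms, of eps]
    by (simp add: cl_transpose_cl_prod_VC \<sigma>_cl_prod subset_iff VC_in_CL rev_map comp_def)
qed

lemma \<sigma>_transpose: "a \<in> CL n \<Longrightarrow> \<sigma> (cl_transpose a) = cl_transpose (\<sigma> a)"
proof -
  assume a: "a \<in> CL n"
  have blades: "basis_blade K \<in> CL n" "cl_transpose (basis_blade K) \<in> CL n" if "K \<in> Pow {..<n}" for K
    using that by (auto intro: basis_blade_in_CL cl_transpose_in_CL)
  have "\<sigma> (cl_transpose a) =
        \<sigma> (cl_sum (\<lambda>K. cl_scale (a K) (cl_transpose (basis_blade K))) (Pow {..<n}))"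
    by (subst CL_eq_sum_basis_blade[OF a]) (simp add: cl_transpose_cl_sum cl_transpose_scale)
  also have "\<dots> = cl_sum (\<lambda>K. cl_scale (cnj (a K)) (\<sigma> (cl_transpose (basis_blade K)))) (Pow {..<n})"
    using blades by (intro \<sigma>_cl_sum_scale) auto
  also have "\<dots> = cl_sum (\<lambda>K. cl_scale (cnj (a K)) (cl_transpose (\<sigma> (basis_blade K)))) (Pow {..<n})"
    by (rule cl_sum_cong) (simp add: \<sigma>_transpose_basis_blade)
  also have "\<dots> = cl_transpose (\<sigma> (cl_sum (\<lambda>K. cl_scale (a K) (basis_blade K)) (Pow {..<n})))"
    using blades by (subst \<sigma>_cl_sum_scale) (auto simp: cl_transpose_cl_sum cl_transpose_scale)
  also have "\<dots> = cl_transpose (\<sigma> a)"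
    by (simp only: CL_eq_sum_basis_blade[OF a, symmetric])
  finally show ?thesis .
qed

lemma sprod_hermitian: "hermitian_form n (sprod n eps \<sigma>)"
  unfolding hermitian_form_def
proof (intro conjI ballI allI)
  fix a b c assume a: "a \<in> CL n" and b: "b \<in> CL n" and c: "c \<in> CL n"
  show "sprod n eps \<sigma> (cl_add a b) c = sprod n eps \<sigma> a c + sprod n eps \<sigma> b c"
    using a b by (simp add: sprod_def cl_transpose_add \<sigma>_add cl_transpose_in_CL cl_mul_add_left tau_add)
  show "sprod n eps \<sigma> a (cl_add b c) = sprod n eps \<sigma> a b + sprod n eps \<sigma> a c"
    by (simp add: sprod_def cl_mul_add_right tau_add)
next
  fix z a b assume a: "a \<in> CL n" and b: "b \<in> CL n"
  show "sprod n eps \<sigma> (cl_scale z a) b = cnj z * sprod n eps \<sigma> a b"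
    using a by (simp add: sprod_def cl_transpose_scale \<sigma>_scale cl_transpose_in_CL cl_mul_scale_left tau_scale)
  show "sprod n eps \<sigma> a (cl_scale z b) = z * sprod n eps \<sigma> a b"
    by (simp add: sprod_def cl_mul_scale_right tau_scale)
next
  fix a b assume a: "a \<in> CL n" and b: "b \<in> CL n"
  have Ta: "cl_transpose a \<in> CL n" using a by (rule cl_transpose_in_CL)
  text \<open>Conjugation is \<sigma> under the trace, and the trace is invariant under transposition.\<close>
  have "cnj (sprod n eps \<sigma> a b) = tau (\<sigma> (cl_mul n eps (\<sigma> (cl_transpose a)) b))"
    unfolding sprod_def by (rule tau_\<sigma>[OF cl_mul_in_CL, symmetric])
  also have "\<dots> = tau (cl_mul n eps (cl_transpose a) (\<sigma> b))"
    using Ta b by (simp add: \<sigma>_mul \<sigma>_in_CL \<sigma>_involutive)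
  also have "\<dots> = tau (cl_transpose (cl_mul n eps (cl_transpose a) (\<sigma> b)))"
    by (rule tau_transpose[symmetric])
  also have "\<dots> = sprod n eps \<sigma> b a"
    using b by (simp add: sprod_def cl_transpose_mul cl_transpose_transpose \<sigma>_transpose)
  finally show "sprod n eps \<sigma> b a = cnj (sprod n eps \<sigma> a b)" ..
qed

lemma sprod_nondegenerate: "nondegenerate_form n (sprod n eps \<sigma>)"
  unfolding nondegenerate_form_def
proof (intro ballI impI)
  fix a assume a: "a \<in> CL n" and orth: "\<forall>b\<in>CL n. sprod n eps \<sigma> a b = 0"
  let ?c = "\<sigma> (cl_transpose a)"
  have c: "?c \<in> CL n" using a by (simp add: \<sigma>_in_CL cl_transpose_in_CL)
  have "?c = cl_zero"
  proof
    fix J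
    show "?c J = cl_zero J"
    proof (cases "J \<subseteq> {..<n}")
      case True
      have "0 = sprod n eps \<sigma> a (basis_blade J)"
        using orth basis_blade_in_CL[OF True] by simp
      also have "\<dots> = blade_sign eps J J * ?c J"
        unfolding sprod_def tau_cl_mul using True
        by (simp add: basis_blade_def if_distrib[of "\<lambda>x. _ * x"] cong: if_cong)
      finally show ?thesis
        using eps_nonzero True
        by (auto simp: cl_zero_def blade_sign_eq eps_prod_def finite_subset_lessThan)
    qed (simp add: cl_zero_def CL_outside[OF c])
  qed
  then have "cl_transpose a = cl_zero"
    using \<sigma>_involutive[OF cl_transpose_in_CL[OF a]] \<sigma>_zero by simp
  then show "a = cl_zero"
    using cl_transpose_transpose[of a] by (simp add: cl_transpose_def cl_zero_def)
qed

lemma sprod_VR: "v \<in> VR n \<Longrightarrow> sprod n eps \<sigma> v v = Q_sigma n eps \<sigma> v"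
  unfolding VR_def sprod_def Q_sigma_def by (auto simp: cl_transpose_VC tau_mul_VC \<sigma>_VC)

lemma sprod_V_sigma: "v \<in> V_sigma n \<sigma> \<Longrightarrow> sprod n eps \<sigma> v v = clQ n eps v"
  unfolding V_sigma_def sprod_def clQ_def by (auto simp: cl_transpose_VC tau_mul_VC)

lemma \<sigma>_transpose_cl_prod_V_sigma:
  assumes "set ws \<subseteq> V_sigma n \<sigma>"
  shows "\<sigma> (cl_transpose (cl_prod n eps ws)) = cl_prod n eps (rev ws)"
proof -
  have "set ws \<subseteq> VC n" "map \<sigma> (rev ws) = rev ws"
    using assms unfolding V_sigma_def by (auto intro!: map_idI)
  then show ?thesis
    by (simp add: cl_transpose_cl_prod_VC \<sigma>_cl_prod subset_iff VC_in_CL)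
qed

lemma sprod_cl_prod_self:
  assumes "set ws \<subseteq> V_sigma n \<sigma>"
  shows "sprod n eps \<sigma> (cl_prod n eps ws) (cl_prod n eps ws) = (\<Prod>w\<leftarrow>ws. clQ n eps w)"
proof -
  have "set ws \<subseteq> VC n" using assms unfolding V_sigma_def by auto
  then show ?thesis
    unfolding sprod_def \<sigma>_transpose_cl_prod_V_sigma[OF assms]
    by (simp add: cl_prod_rev_mul_cl_prod tau_scale tau_one)
qed

end

interpretation cl_space: vector_space "cl_scale :: complex \<Rightarrow> cl \<Rightarrow> cl"
  by unfold_locales (auto simp: cl_scale_def algebra_simps plus_fun_def)

lemma cl_sum_eq_sum: "cl_sum f A = sum f A"
proof -
  have "sum f A x = (\<Sum>i\<in>A. f i x)" for x
    by (induction A rule: infinite_finite_induct) auto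
  then show ?thesis unfolding cl_sum_def by auto
qed

lemma cl_sum_scale_eq_sum_image:
  "inj_on b A \<Longrightarrow> cl_sum (\<lambda>I. cl_scale (u (b I)) (b I)) A = (\<Sum>v\<in>b ` A. cl_scale (u v) v)"
  by (simp add: cl_sum_eq_sum sum.reindex)

lemma CL_subset_span_basis_blade: "CL n \<subseteq> cl_space.span (basis_blade ` Pow {..<n})"
proof
  fix a assume a: "a \<in> CL n"
  show "a \<in> cl_space.span (basis_blade ` Pow {..<n})"
    by (subst CL_eq_sum_basis_blade[OF a], unfold cl_sum_eq_sum)
      (intro cl_space.span_sum cl_space.span_scale cl_space.span_base imageI)
qed

text \<open>Otherwise adjoining a to the family would give 2^n + 1 independent vectors in the span of
  the 2^n basis blades.\<close>
lemma CL_spanned_by_independent_family: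
  assumes inj: "inj_on b (Pow {..<n})" and into: "b ` Pow {..<n} \<subseteq> CL n"
    and indep: "\<And>c. cl_sum (\<lambda>I. cl_scale (c I) (b I)) (Pow {..<n}) = cl_zero \<Longrightarrow> \<forall>I\<in>Pow {..<n}. c I = 0"
    and a: "a \<in> CL n"
  shows "\<exists>c. a = cl_sum (\<lambda>I. cl_scale (c I) (b I)) (Pow {..<n})"
proof -
  let ?B = "b ` Pow {..<n}"
  have fin: "finite ?B" by simp
  have card: "card ?B = 2 ^ n"
    using card_image[OF inj] by (simp add: card_Pow)
  have "cl_space.independent ?B"
  proof
    assume "cl_space.dependent ?B"
    then obtain u where u: "\<exists>v\<in>?B. u v \<noteq> 0" "(\<Sum>v\<in>?B. cl_scale (u v) v) = 0"
      unfolding cl_space.dependent_finite[OF fin] by blast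
    then have "cl_sum (\<lambda>I. cl_scale (u (b I)) (b I)) (Pow {..<n}) = cl_zero"
      by (simp add: cl_sum_scale_eq_sum_image[OF inj] cl_zero_def zero_fun_def)
    from indep[OF this] u(1) show False by blast
  qed
  show ?thesis
  proof (cases "a \<in> cl_space.span ?B")
    case True
    then obtain u where "a = (\<Sum>v\<in>?B. cl_scale (u v) v)"
      unfolding cl_space.span_finite[OF fin] by blast
    then show ?thesis
      by (intro exI[of _ "\<lambda>I. u (b I)"]) (simp add: cl_sum_scale_eq_sum_image[OF inj])
  next
    case False
    have "cl_space.independent (insert a ?B)"
      using False \<open>cl_space.independent ?B\<close> by (rule cl_space.independent_insertI)
    moreover have "insert a ?B \<subseteq> cl_space.span (basis_blade ` Pow {..<n})"
      using a into CL_subset_span_basis_blade by blast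
    ultimately have "card (insert a ?B) \<le> card (basis_blade ` Pow {..<n::nat})"
      using cl_space.independent_span_bound[of "basis_blade ` Pow {..<n}" "insert a ?B"] by simp
    also have "\<dots> \<le> 2 ^ n"
      using card_image_le[of "Pow {..<n}" basis_blade] by (simp add: card_Pow)
    finally have "card (insert a ?B) \<le> card ?B"
      using card by simp
    moreover have "a \<notin> ?B"
      using False cl_space.span_base[of a ?B] by blast
    ultimately show ?thesis using fin by simp
  qed
qed

context clifford_real_structure
begin

lemma sprod_blade_of:
  assumes "pon_basis_Vsigma n eps \<sigma> e" "I \<subseteq> {..<n}"
  shows "sprod n eps \<sigma> (blade_of n eps e I) (blade_of n eps e J) =
         tau (cl_prod n eps (map e (rev (sorted_list_of_set I) @ sorted_list_of_set J)))"
proof -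
  have "set (map e (sorted_list_of_set I)) \<subseteq> V_sigma n \<sigma>"
    using assms finite_subset_lessThan[OF assms(2)] unfolding pon_basis_Vsigma_def by auto
  then show ?thesis
    unfolding sprod_def blade_of_def by (simp add: \<sigma>_transpose_cl_prod_V_sigma cl_prod_append rev_map)
qed

lemma sprod_blade_of_orthogonal:
  assumes "pon_basis_Vsigma n eps \<sigma> e" "I \<subseteq> {..<n}" "J \<subseteq> {..<n}" "I \<noteq> J"
  shows "sprod n eps \<sigma> (blade_of n eps e I) (blade_of n eps e J) = 0"
  unfolding sprod_blade_of[OF assms(1,2)]
  using assms by (intro tau_cl_prod_anticommuting_frame even_dim anticommuting_frame_pon_basis)

lemma sprod_blade_of_self:
  assumes "pon_basis_Vsigma n eps \<sigma> e" "I \<subseteq> {..<n}"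
  shows "sprod n eps \<sigma> (blade_of n eps e I) (blade_of n eps e I) \<in> {1, -1}"
proof -
  let ?ws = "map e (sorted_list_of_set I)"
  have "set ?ws \<subseteq> V_sigma n \<sigma>" "\<forall>w\<in>set ?ws. clQ n eps w \<in> {1, -1}"
    using assms finite_subset_lessThan[OF assms(2)] unfolding pon_basis_Vsigma_def by auto
  moreover have "(\<Prod>w\<leftarrow>ws. clQ n eps w) \<in> {1, -1}" if "\<forall>w\<in>set ws. clQ n eps w \<in> {1, -1}" for ws
    using that by (induction ws) auto
  ultimately show ?thesis
    unfolding blade_of_def by (simp only: sprod_cl_prod_self)
qed

lemma blade_of_coefficients_zero:
  assumes e: "pon_basis_Vsigma n eps \<sigma> e"
    and zero: "cl_sum (\<lambda>I. cl_scale (c I) (blade_of n eps e I)) (Pow {..<n}) = cl_zero"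
  shows "\<forall>J\<in>Pow {..<n}. c J = 0"
proof
  fix J assume J: "J \<in> Pow {..<n}"
  let ?b = "blade_of n eps e"
  have "0 = sprod n eps \<sigma> (?b J) (cl_sum (\<lambda>I. cl_scale (c I) (?b I)) (Pow {..<n}))"
    unfolding zero by (simp add: sprod_def cl_zero_def tau_cl_mul)
  also have "\<dots> = (\<Sum>I\<in>Pow {..<n}. c I * sprod n eps \<sigma> (?b J) (?b I))"
    by (simp add: sprod_def cl_mul_cl_sum_right tau_cl_sum cl_mul_scale_right tau_scale)
  also have "\<dots> = (\<Sum>I\<in>Pow {..<n}. if I = J then c J * sprod n eps \<sigma> (?b J) (?b J) else 0)"
    using J sprod_blade_of_orthogonal[OF e] by (intro sum.cong) auto
  also have "\<dots> = c J * sprod n eps \<sigma> (?b J) (?b J)"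
    using J by simp
  finally have "c J * sprod n eps \<sigma> (?b J) (?b J) = 0" ..
  moreover have "sprod n eps \<sigma> (?b J) (?b J) \<noteq> 0"
    using sprod_blade_of_self[OF e, of J] J by auto
  ultimately show "c J = 0" by simp
qed

lemma inj_on_blade_of:
  assumes e: "pon_basis_Vsigma n eps \<sigma> e"
  shows "inj_on (blade_of n eps e) (Pow {..<n})"
proof (rule inj_onI, rule ccontr)
  fix I J assume "I \<in> Pow {..<n}" "J \<in> Pow {..<n}" "blade_of n eps e I = blade_of n eps e J" "I \<noteq> J"
  then show False
    using sprod_blade_of_orthogonal[OF e, of I J] sprod_blade_of_self[OF e, of I] by auto
qed

lemma pon_basis_CL_blade_of:
  assumes e: "pon_basis_Vsigma n eps \<sigma> e"
  shows "pon_basis_CL n (sprod n eps \<sigma>) (blade_of n eps e)"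
proof -
  have into: "blade_of n eps e ` Pow {..<n} \<subseteq> CL n"
    unfolding blade_of_def by (auto intro: cl_prod_in_CL)
  note spanning = CL_spanned_by_independent_family[OF inj_on_blade_of[OF e] into]
  show ?thesis
    unfolding pon_basis_CL_def
    using into blade_of_coefficients_zero[OF e] sprod_blade_of_orthogonal[OF e]
      sprod_blade_of_self[OF e] spanning[OF blade_of_coefficients_zero[OF e]]
    by (intro conjI ballI allI impI) auto
qed

end

theorem proposition3:
  fixes n :: nat and eps :: "nat \<Rightarrow> real" and \<sigma> :: "cl \<Rightarrow> cl"
  assumes "even n"
    and "\<forall>i<n. eps i = 1 \<or> eps i = -1"
    and "real_structure n eps \<sigma>"
  shows "hermitian_form n (sprod n eps \<sigma>) \<and>
         nondegenerate_form n (sprod n eps \<sigma>) \<and>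
         (\<forall>v\<in>VR n. sprod n eps \<sigma> v v = Q_sigma n eps \<sigma> v) \<and>
         (\<forall>v\<in>V_sigma n \<sigma>. sprod n eps \<sigma> v v = clQ n eps v) \<and>
         (\<forall>ws. set ws \<subseteq> V_sigma n \<sigma> \<longrightarrow>
           sprod n eps \<sigma> (cl_prod n eps ws) (cl_prod n eps ws) = (\<Prod>w\<leftarrow>ws. clQ n eps w)) \<and>
         (\<forall>e. pon_basis_Vsigma n eps \<sigma> e \<longrightarrow> pon_basis_CL n (sprod n eps \<sigma>) (blade_of n eps e))"
proof -
  interpret clifford_real_structure n eps \<sigma>
    using assms by unfold_locales force+
  show ?thesis
    using sprod_hermitian sprod_nondegenerate sprod_VR sprod_V_sigma sprod_cl_prod_self
      pon_basis_CL_blade_of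
    by blast
qed

end
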